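(* Let $N\ge 1$, let $\mathbf{h}_s,\mathbf{h}_0\in\mathbb{C}^N$, let $\mathbf{R}\in\mathbb{C}^{N\times N}$ be Hermitian positive definite, and let $\bar P>0$, $P_t>0$, $\epsilon>0$. Consider the robust design problem $\mathbf{P1}$: $$\max_{\mathbf{S}\succeq 0}\ \log\big(1+\mathbf{h}_s^H\mathbf{S}\mathbf{h}_s\big)\quad\text{subject to}\quad \mathrm{tr}(\mathbf{S})\le \bar P,\ \ \mathbf{h}^H\mathbf{S}\mathbf{h}\le P_t\ \text{ for all } \mathbf{h}\in\mathbb{C}^N \text{ with } (\mathbf{h}-\mathbf{h}_0)^H\mathbf{R}^{-1}(\mathbf{h}-\mathbf{h}_0)\le\epsilon,$$ where the maximization is over Hermitian positive semidefinite $N\times N$ matrices $\mathbf{S}$. Then the optimal covariance matrix $\mathbf{S}$ of $\mathbf{P1}$ has rank one.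
   Context: $\mathbf{S}$ is the transmit covariance matrix of a secondary user with $N$ transmit antennas; $\mathbf{h}_s$ is the secondary link channel, and $\mathbf{h}$ is the (uncertain) channel to the primary user, known only to lie in the ellipsoid above with center $\mathbf{h}_0$ and shape matrix $\mathbf{R}$. *)

theory Defs
  imports "HOL-Analysis.Analysis"
begin

text \<open>Complex N x N matrices are represented as complex^'n^'n, with N = CARD('n).\<close>

definition hform :: "complex^'n^'n \<Rightarrow> complex^'n \<Rightarrow> complex" where
  "hform A x = (\<Sum>i\<in>UNIV. \<Sum>j\<in>UNIV. cnj (x$i) * (A$i$j) * (x$j))"

definition hermitian_mat :: "complex^'n^'n \<Rightarrow> bool" where
  "hermitian_mat A \<longleftrightarrow> (\<forall>i j. A$i$j = cnj (A$j$i))"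

definition psd_mat :: "complex^'n^'n \<Rightarrow> bool" where
  "psd_mat A \<longleftrightarrow> hermitian_mat A \<and> (\<forall>x. 0 \<le> Re (hform A x))"

definition pd_mat :: "complex^'n^'n \<Rightarrow> bool" where
  "pd_mat A \<longleftrightarrow> hermitian_mat A \<and> (\<forall>x. x \<noteq> 0 \<longrightarrow> 0 < Re (hform A x))"

text \<open>Feasible set of P1 (quadratic forms of Hermitian matrices are real, so Re is harmless).\<close>
definition P1_feasible ::
  "real \<Rightarrow> real \<Rightarrow> real \<Rightarrow> complex^'n^'n \<Rightarrow> complex^'n \<Rightarrow> complex^'n^'n \<Rightarrow> bool" where
  "P1_feasible Pbar Pt \<epsilon> R h0 S \<longleftrightarrow>
     psd_mat S \<and> Re (trace S) \<le> Pbar \<and>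
     (\<forall>h. Re (hform (matrix_inv R) (h - h0)) \<le> \<epsilon> \<longrightarrow> Re (hform S h) \<le> Pt)"

definition P1_objective :: "complex^'n \<Rightarrow> complex^'n^'n \<Rightarrow> real" where
  "P1_objective hs S = ln (1 + Re (hform S hs))"

definition P1_optimal ::
  "real \<Rightarrow> real \<Rightarrow> real \<Rightarrow> complex^'n^'n \<Rightarrow> complex^'n \<Rightarrow> complex^'n \<Rightarrow> complex^'n^'n \<Rightarrow> bool" where
  "P1_optimal Pbar Pt \<epsilon> R h0 hs S \<longleftrightarrow>
     P1_feasible Pbar Pt \<epsilon> R h0 S \<and>
     (\<forall>S'. P1_feasible Pbar Pt \<epsilon> R h0 S' \<longrightarrow> P1_objective hs S' \<le> P1_objective hs S)"

end

theory Submission imports Defs begin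

text \<open>
  Every feasible covariance is dominated by a rank-one one carrying the same signal power:
  for a positive semidefinite \<open>S\<close> with \<open>t = h\<^sub>s\<^sup>H S h\<^sub>s > 0\<close>, the vector
  \<open>w = S h\<^sub>s / \<surd>t\<close> satisfies \<open>|h\<^sup>H w|\<^sup>2 \<le> h\<^sup>H S h\<close> for every \<open>h\<close> (Cauchy-Schwarz for the
  semi-inner product of \<open>S\<close>) and \<open>|h\<^sub>s\<^sup>H w|\<^sup>2 = t\<close>. Hence \<open>w w\<^sup>H\<close> is feasible (its trace is bounded by
  that of \<open>S\<close>) and achieves the objective of \<open>S\<close>. So P1 reduces to maximising \<open>|h\<^sub>s\<^sup>H v|\<^sup>2\<close> over
  the set of vectors \<open>v\<close> with \<open>w w\<^sup>H\<close> feasible, which is compact because \<open>R\<^sup>-\<^sup>1\<close> is positive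
  definite and the uncertainty ellipsoid is therefore bounded.
\<close>

definition cinner :: "complex^'n \<Rightarrow> complex^'n \<Rightarrow> complex" where
  "cinner x v = (\<Sum>i\<in>UNIV. cnj (x$i) * v$i)"

definition outer :: "complex^'n \<Rightarrow> complex^'n^'n" where
  "outer v = (\<chi> i j. v$i * cnj (v$j))"

definition sesq :: "complex^'n^'n \<Rightarrow> complex^'n \<Rightarrow> complex^'n \<Rightarrow> complex" where
  "sesq A x y = (\<Sum>i\<in>UNIV. \<Sum>j\<in>UNIV. cnj (x$i) * (A$i$j) * (y$j))"

lemma hform_eq_sesq: "hform A x = sesq A x x"
  unfolding hform_def sesq_def ..

lemma norm_vec_complex_sq: "(norm (v::complex^'n))^2 = (\<Sum>i\<in>UNIV. (cmod (v$i))^2)"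
  unfolding norm_vec_def L2_set_def by (simp add: sum_nonneg)

lemma cinner_zero_right [simp]: "cinner x 0 = 0"
  unfolding cinner_def by simp

lemma cinner_axis_left: "cinner (axis i 1) v = v$i"
  unfolding cinner_def
  by (simp add: axis_def if_distrib[of cnj] if_distrib[of "\<lambda>c. c * _"] cong: if_cong)

lemma cinner_axis_right: "cinner h (axis k a) = cnj (h$k) * a"
  unfolding cinner_def by (simp add: axis_def if_distrib[of "\<lambda>c. _ * c"] cong: if_cong)

lemma cinner_scale_right: "cinner x (c *s w) = c * cinner x w"
  unfolding cinner_def by (simp add: sum_distrib_left algebra_simps)

lemma cinner_matrix_vector_mult: "cinner x (A *v y) = sesq A x y"
  unfolding cinner_def sesq_def matrix_vector_mult_def by (simp add: sum_distrib_left mult.assoc)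

lemma hform_axis: "hform A (axis i 1) = A$i$i"
  unfolding hform_def
  by (simp add: axis_def if_distrib[of cnj] if_distrib[of "\<lambda>c. c * _"] if_distrib[of "\<lambda>c. _ * c"]
      cong: if_cong)

lemma hform_matrix_vector_mult: "hform A x = (\<Sum>i\<in>UNIV. cnj (x$i) * (A *v x)$i)"
  unfolding hform_def matrix_vector_mult_def by (simp add: sum_distrib_left mult.assoc)

lemma continuous_on_Re_hform: "continuous_on S (\<lambda>v. Re (hform A v))"
  unfolding hform_def by (intro continuous_intros)

lemma Re_hform_outer: "Re (hform (outer v) x) = (cmod (cinner x v))^2"
proof -
  have "hform (outer v) x = (\<Sum>i\<in>UNIV. cnj (x$i) * v$i) * (\<Sum>j\<in>UNIV. cnj (v$j) * x$j)"
    unfolding hform_def outer_def by (simp add: sum_product mult.assoc mult.left_commute)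
  also have "\<dots> = cinner x v * cnj (cinner x v)"
    by (simp add: cinner_def cnj_sum mult.commute)
  finally show ?thesis by (simp add: complex_mult_cnj cmod_def power2_eq_square)
qed

lemma Re_trace_outer: "Re (trace (outer v)) = (norm v)^2"
  unfolding norm_vec_complex_sq trace_def outer_def
  by (simp add: complex_mult_cnj cmod_def power2_eq_square)

lemma psd_mat_outer: "psd_mat (outer v)"
  unfolding psd_mat_def hermitian_mat_def Re_hform_outer by (simp add: outer_def mult.commute)

lemma rank_outer:
  assumes "v \<noteq> 0" shows "rank (outer v) = 1"
proof -
  obtain k where vk: "v$k \<noteq> 0" using assms by (metis vec_eq_iff zero_index)
  have row_multiple: "row i (outer v) = (v$i / v$k) *s row k (outer v)" for i
    using vk by (simp add: vec_eq_iff row_def outer_def)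
  have "row k (outer v) $ k \<noteq> 0" using vk by (simp add: row_def outer_def)
  then have "row k (outer v) \<noteq> 0" by auto
  have "vec.dim (rows (outer v)) = 1"
  proof (rule vec.dim_unique[of "{row k (outer v)}"])
    show "rows (outer v) \<subseteq> vec.span {row k (outer v)}"
    proof
      fix r assume "r \<in> rows (outer v)"
      then obtain i where "r = (v$i / v$k) *s row k (outer v)"
        unfolding rows_def using row_multiple by blast
      then show "r \<in> vec.span {row k (outer v)}"
        by (simp add: vec.span_scale vec.span_base)
    qed
    show "{row k (outer v)} \<subseteq> rows (outer v)" unfolding rows_def by blast
    show "vec.independent {row k (outer v)}" using \<open>row k (outer v) \<noteq> 0\<close> by simp
  qed simp
  then show ?thesis by (simp add: row_rank_def_gen)
qed

lemma sesq_add_scale: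
  "sesq S (p *s x + q *s y) (p *s x + q *s y) =
     cnj p * p * sesq S x x + cnj p * q * sesq S x y + cnj q * p * sesq S y x + cnj q * q * sesq S y y"
proof -
  have "cnj ((p *s x + q *s y)$i) * S$i$j * ((p *s x + q *s y)$j) =
     cnj p * p * (cnj (x$i) * S$i$j * x$j) + cnj p * q * (cnj (x$i) * S$i$j * y$j)
     + cnj q * p * (cnj (y$i) * S$i$j * x$j) + cnj q * q * (cnj (y$i) * S$i$j * y$j)" for i j
    by (simp only: vector_add_component vector_smult_component complex_cnj_add complex_cnj_mult)
      algebra
  then show ?thesis unfolding sesq_def by (simp only: sum.distrib sum_distrib_left)
qed

lemma sesq_hermitian_swap:
  assumes "hermitian_mat S" shows "sesq S y x = cnj (sesq S x y)"
proof -
  have "cnj (S$i$j) = S$j$i" for i j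
    using assms unfolding hermitian_mat_def by (metis complex_cnj_cnj)
  then show ?thesis unfolding sesq_def cnj_sum complex_cnj_mult complex_cnj_cnj
    by (subst sum.swap) (simp add: mult.commute mult.left_commute)
qed

lemma sesq_hermitian_real:
  assumes "hermitian_mat S" shows "sesq S x x = of_real (Re (sesq S x x))"
  using sesq_hermitian_swap[OF assms, of x x] by (metis Reals_cnj_iff complex_is_Real_iff of_real_Re)

lemma psd_sesq_Cauchy_Schwarz:
  assumes "psd_mat S" and pos: "0 < Re (sesq S y y)"
  shows "(cmod (sesq S x y))^2 \<le> Re (sesq S x x) * Re (sesq S y y)"
proof -
  define a b c where "a = Re (sesq S x x)" and "b = Re (sesq S y y)" and "c = sesq S x y"
  have herm: "hermitian_mat S" using assms(1) unfolding psd_mat_def by simp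
  have xx: "sesq S x x = of_real a" and yy: "sesq S y y = of_real b"
    using sesq_hermitian_real[OF herm] a_def b_def by simp_all
  have yx: "sesq S y x = cnj c" unfolding c_def by (rule sesq_hermitian_swap[OF herm])
  have cc: "c * cnj c = of_real ((cmod c)^2)" by (metis complex_norm_square of_real_power)
  \<comment> \<open>evaluate the form at \<open>b x - c y\<close>, which kills the cross terms up to \<open>b |c|\<^sup>2\<close>\<close>
  define z where "z = of_real b *s x + (- cnj c) *s y"
  have "sesq S z z = of_real b * of_real b * of_real a - of_real b * (c * cnj c)"
    unfolding z_def sesq_add_scale[of S] xx yy yx c_def[symmetric]
    by (simp add: ring_distribs mult.assoc mult.left_commute)
  then have "sesq S z z = of_real (b * (b * a - (cmod c)^2))"
    unfolding cc by (simp add: algebra_simps)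
  moreover have "0 \<le> Re (sesq S z z)"
    using assms(1) unfolding psd_mat_def hform_eq_sesq by blast
  ultimately have "0 \<le> b * (b * a - (cmod c)^2)" by simp
  then show ?thesis using pos unfolding a_def b_def c_def by (simp add: zero_le_mult_iff mult.commute)
qed

lemma psd_dominates_outer:
  assumes "psd_mat S"
  obtains w where "\<And>x. (cmod (cinner x w))^2 \<le> Re (hform S x)"
    and "(cmod (cinner y w))^2 = Re (hform S y)"
proof (cases "Re (hform S y) = 0")
  case True
  then show ?thesis using assms that[of 0] by (simp add: cinner_def psd_mat_def)
next
  case False
  define t where "t = Re (hform S y)"
  have t: "0 < t" using False assms unfolding t_def psd_mat_def by (simp add: order_neq_le_trans)
  define w where "w = of_real (1 / sqrt t) *s (S *v y)"
  have cinner_w: "(cmod (cinner x w))^2 = (cmod (sesq S x y))^2 / t" for x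
    using t by (simp add: w_def cinner_scale_right cinner_matrix_vector_mult norm_divide power_divide)
  have "(cmod (cinner x w))^2 \<le> Re (hform S x)" for x
    using psd_sesq_Cauchy_Schwarz[OF assms, of y x] t
    unfolding cinner_w hform_eq_sesq t_def by (simp add: divide_le_eq)
  moreover have "(cmod (cinner y w))^2 = t"
  proof -
    have "sesq S y y = of_real t"
      using sesq_hermitian_real assms unfolding t_def hform_eq_sesq psd_mat_def by metis
    then show ?thesis unfolding cinner_w using t by (simp add: power2_eq_square)
  qed
  ultimately show ?thesis using that t_def by blast
qed

lemma norm_sq_le_trace_if_dominated:
  assumes "\<And>x. (cmod (cinner x w))^2 \<le> Re (hform S x)"
  shows "(norm w)^2 \<le> Re (trace S)"
proof -
  have "(norm w)^2 = (\<Sum>i\<in>UNIV. (cmod (cinner (axis i 1) w))^2)"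
    unfolding norm_vec_complex_sq cinner_axis_left ..
  also have "\<dots> \<le> (\<Sum>i\<in>UNIV. Re (hform S (axis i 1)))"
    by (intro sum_mono assms)
  also have "\<dots> = Re (trace S)" by (simp add: hform_axis trace_def Re_sum)
  finally show ?thesis .
qed

lemma pd_mat_matrix_inv_pos:
  assumes "pd_mat R" and "x \<noteq> 0"
  shows "0 < Re (hform (matrix_inv R) x)"
proof -
  have pos: "y \<noteq> 0 \<Longrightarrow> 0 < Re (hform R y)" for y using assms(1) unfolding pd_mat_def by blast
  have "R *v y = 0 \<Longrightarrow> y = 0" for y
    using pos[of y] by (auto simp: hform_matrix_vector_mult)
  then have "invertible R"
    using matrix_left_invertible_ker invertible_left_inverse by blast
  then obtain B where "R ** B = mat 1 \<and> B ** R = mat 1" unfolding invertible_def by blast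
  then have "R ** matrix_inv R = mat 1 \<and> matrix_inv R ** R = mat 1"
    unfolding matrix_inv_def by (rule someI)
  define y where "y = matrix_inv R *v x"
  have Ry: "R *v y = x"
    by (simp add: y_def matrix_vector_mul_assoc \<open>R ** matrix_inv R = mat 1 \<and> _\<close>)
  then have "0 < Re (hform R y)" using assms(2) by (intro pos) auto
  moreover have "hform R y = cnj (hform (matrix_inv R) x)"
    by (simp add: hform_matrix_vector_mult Ry y_def[symmetric] cnj_sum mult.commute)
  ultimately show ?thesis by simp
qed

lemma hform_scale: "hform A (c *s x) = cnj c * c * hform A x"
  using sesq_add_scale[of A c x 0 x] by (simp add: hform_eq_sesq)

lemma norm_scale_complex: "norm (c *s (x::complex^'n)) = cmod c * norm x"
proof -
  have "(norm (c *s x))^2 = (cmod c * norm x)^2"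
    unfolding norm_vec_complex_sq power_mult_distrib
    by (simp add: norm_mult power_mult_distrib sum_distrib_left)
  then show ?thesis by (rule power2_eq_imp_eq) auto
qed

lemma pos_hform_coercive:
  assumes pos: "\<And>x. x \<noteq> 0 \<Longrightarrow> 0 < Re (hform Q x)"
  obtains m where "0 < m" and "\<And>x::complex^'n. m * (norm x)^2 \<le> Re (hform Q x)"
proof -
  obtain u :: "complex^'n" where "norm u = 1" using vector_choose_size[of 1] by auto
  then have "sphere (0::complex^'n) 1 \<noteq> {}" by auto
  then obtain x1 where x1: "x1 \<in> sphere 0 1"
    and min: "\<And>u. u \<in> sphere 0 1 \<Longrightarrow> Re (hform Q x1) \<le> Re (hform Q u)"
    using continuous_attains_inf[OF compact_sphere _ continuous_on_Re_hform] by blast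
  have "Re (hform Q x1) * (norm x)^2 \<le> Re (hform Q x)" for x
  proof (cases "x = 0")
    case True then show ?thesis by (simp add: hform_def)
  next
    case False
    define u where "u = of_real (1 / norm x) *s x"
    have "norm u = 1" unfolding u_def norm_scale_complex using False by (simp add: norm_divide)
    have "x = of_real (norm x) *s u"
      using False by (simp add: u_def vector_smult_assoc flip: of_real_mult)
    then have "hform Q x = of_real ((norm x)^2) * hform Q u"
      by (metis hform_scale complex_cnj_complex_of_real of_real_mult power2_eq_square)
    then have "Re (hform Q x) = (norm x)^2 * Re (hform Q u)" by simp
    then show ?thesis using min[of u] \<open>norm u = 1\<close> by (simp add: mult.commute mult_right_mono)
  qed
  moreover have "0 < Re (hform Q x1)" using x1 by (intro pos) auto
  ultimately show ?thesis using that by blast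
qed

lemma bounded_hform_sublevel:
  assumes "\<And>x. x \<noteq> 0 \<Longrightarrow> 0 < Re (hform Q x)"
  shows "bounded {h::complex^'n. Re (hform Q (h - h0)) \<le> \<epsilon>}"
proof -
  obtain m where m: "0 < m" "\<And>x::complex^'n. m * (norm x)^2 \<le> Re (hform Q x)"
    using pos_hform_coercive assms by blast
  have "norm h \<le> norm h0 + sqrt (\<epsilon> / m)" if "Re (hform Q (h - h0)) \<le> \<epsilon>" for h
  proof -
    have "(norm (h - h0))^2 \<le> \<epsilon> / m"
      using m(2)[of "h - h0"] that m(1) by (simp add: field_simps)
    then have "norm (h - h0) \<le> sqrt (\<epsilon> / m)" by (simp add: real_le_rsqrt)
    then show ?thesis using norm_triangle_ineq2[of h h0] by linarith
  qed
  then show ?thesis unfolding bounded_iff by blast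
qed

definition beam_set :: "real \<Rightarrow> real \<Rightarrow> (complex^'n) set \<Rightarrow> (complex^'n) set" where
  "beam_set Pbar Pt E = {v. (norm v)^2 \<le> Pbar \<and> (\<forall>h\<in>E. (cmod (cinner h v))^2 \<le> Pt)}"

lemma compact_beam_set: "compact (beam_set Pbar Pt E)"
proof -
  have eq: "beam_set Pbar Pt E =
      {v. (norm v)^2 \<le> Pbar} \<inter> (\<Inter>h\<in>E. {v. (cmod (cinner h v))^2 \<le> Pt})"
    unfolding beam_set_def by blast
  have c1: "closed {v::complex^'n. (norm v)^2 \<le> Pbar}"
    by (intro closed_Collect_le continuous_intros)
  have c2: "closed {v. (cmod (cinner h v))^2 \<le> Pt}" for h
    unfolding cinner_def by (intro closed_Collect_le continuous_intros)
  have "closed (beam_set Pbar Pt E)" unfolding eq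
    by (intro closed_Int closed_INT c1 ballI c2)
  moreover have "bounded (beam_set Pbar Pt E)"
    by (rule bounded_subset[OF bounded_cball[of 0 "sqrt Pbar"]])
      (auto simp: beam_set_def real_le_rsqrt)
  ultimately show ?thesis by (simp add: compact_eq_bounded_closed)
qed

lemma beam_set_nonzero:
  fixes E :: "(complex^'n) set"
  assumes "bounded E" and "0 < Pbar" and "0 < Pt"
  obtains v where "v \<in> beam_set Pbar Pt E" and "v \<noteq> 0"
proof -
  obtain M where M: "0 < M" "\<And>h. h \<in> E \<Longrightarrow> norm h \<le> M"
    using assms(1) unfolding bounded_pos by blast
  define c where "c = min (sqrt Pbar) (sqrt Pt / M)"
  have c: "0 < c" "c \<le> sqrt Pbar" "c * M \<le> sqrt Pt"
    using assms M(1) by (auto simp: c_def min_def field_simps)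
  obtain k :: 'n where True by simp
  define v where "v = axis k (complex_of_real c)"
  have "(norm v)^2 \<le> Pbar"
  proof -
    have "(norm v)^2 = c^2" unfolding norm_vec_complex_sq v_def
      by (simp add: axis_def if_distrib[of "\<lambda>z. (cmod z)^2"] cong: if_cong)
    then show ?thesis using c assms(2) by (metis power_mono real_sqrt_pow2 less_imp_le)
  qed
  moreover have "(cmod (cinner h v))^2 \<le> Pt" if "h \<in> E" for h
  proof -
    have "cmod (cinner h v) = c * cmod (h$k)"
      using c(1) by (simp add: v_def cinner_axis_right norm_mult)
    also have "\<dots> \<le> c * M"
      using c(1) M(2)[OF that] Finite_Cartesian_Product.norm_nth_le[of h k] by (simp add: order_trans)
    finally have "cmod (cinner h v) \<le> sqrt Pt" using c(3) by simp
    then show ?thesis using assms(3) by (metis norm_ge_zero power_mono real_sqrt_pow2 less_imp_le)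
  qed
  moreover have "v \<noteq> 0" using c(1) by (simp add: v_def)
  ultimately show ?thesis using that unfolding beam_set_def by blast
qed

lemma compact_attains_sup_avoiding:
  assumes "compact F" and "continuous_on F g" and "a \<in> F" and "b \<in> F" and "b \<noteq> a"
    and "g a \<le> (g b :: real)"
  obtains v where "v \<in> F" and "v \<noteq> a" and "\<And>y. y \<in> F \<Longrightarrow> g y \<le> g v"
proof -
  obtain v1 where "v1 \<in> F" and max: "\<And>y. y \<in> F \<Longrightarrow> g y \<le> g v1"
    using continuous_attains_sup[OF assms(1) _ assms(2)] assms(3) by blast
  show ?thesis
  proof (cases "v1 = a")
    case True
    then show ?thesis using that[of b] assms(4-6) max by force
  next
    case False
    then show ?thesis using that \<open>v1 \<in> F\<close> max by blast
  qed
qed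

lemma P1_feasible_outer_iff:
  "P1_feasible Pbar Pt \<epsilon> R h0 (outer v) \<longleftrightarrow>
     v \<in> beam_set Pbar Pt {h. Re (hform (matrix_inv R) (h - h0)) \<le> \<epsilon>}"
  unfolding P1_feasible_def beam_set_def Re_trace_outer Re_hform_outer
  using psd_mat_outer by auto

lemma P1_feasible_dominated_by_beam:
  assumes "P1_feasible Pbar Pt \<epsilon> R h0 S"
  obtains v where "v \<in> beam_set Pbar Pt {h. Re (hform (matrix_inv R) (h - h0)) \<le> \<epsilon>}"
    and "(cmod (cinner hs v))^2 = Re (hform S hs)"
proof -
  have "psd_mat S" using assms unfolding P1_feasible_def by simp
  then obtain w where dom: "\<And>x. (cmod (cinner x w))^2 \<le> Re (hform S x)"
    and eq: "(cmod (cinner hs w))^2 = Re (hform S hs)"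
    using psd_dominates_outer by metis
  have "(norm w)^2 \<le> Pbar"
    using norm_sq_le_trace_if_dominated[OF dom] assms unfolding P1_feasible_def by linarith
  moreover have "(cmod (cinner h w))^2 \<le> Pt" if "Re (hform (matrix_inv R) (h - h0)) \<le> \<epsilon>" for h
    using dom[of h] assms that unfolding P1_feasible_def by force
  ultimately show ?thesis using that eq unfolding beam_set_def by blast
qed

theorem lemma1:
  fixes hs h0 :: "complex^'n" and R :: "complex^'n^'n"
    and Pbar Pt \<epsilon> :: real
  assumes "pd_mat R" and "Pbar > 0" and "Pt > 0" and "\<epsilon> > 0"
  shows "\<exists>S. P1_optimal Pbar Pt \<epsilon> R h0 hs S \<and> rank S = 1"
proof -
  define F where "F = beam_set Pbar Pt {h. Re (hform (matrix_inv R) (h - h0)) \<le> \<epsilon>}"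
  have "bounded {h. Re (hform (matrix_inv R) (h - h0)) \<le> \<epsilon>}"
    using pd_mat_matrix_inv_pos[OF assms(1)] by (rule bounded_hform_sublevel)
  then obtain v0 where "v0 \<in> F" "v0 \<noteq> 0"
    using beam_set_nonzero assms(2,3) unfolding F_def by blast
  have "compact F" unfolding F_def by (rule compact_beam_set)
  moreover have "continuous_on F (\<lambda>v. (cmod (cinner hs v))^2)"
    unfolding cinner_def by (intro continuous_intros)
  moreover have "0 \<in> F" using assms(2,3) by (simp add: F_def beam_set_def)
  moreover note \<open>v0 \<in> F\<close> \<open>v0 \<noteq> 0\<close>
  moreover have "(cmod (cinner hs 0))^2 \<le> (cmod (cinner hs v0))^2" by simp
  ultimately obtain v where "v \<in> F" "v \<noteq> 0"
    and max: "\<And>y. y \<in> F \<Longrightarrow> (cmod (cinner hs y))^2 \<le> (cmod (cinner hs v))^2"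
    by (rule compact_attains_sup_avoiding) blast
  have "P1_objective hs S \<le> P1_objective hs (outer v)"
    if feasible: "P1_feasible Pbar Pt \<epsilon> R h0 S" for S
  proof -
    obtain w where "w \<in> F" and w: "(cmod (cinner hs w))^2 = Re (hform S hs)"
      using P1_feasible_dominated_by_beam[OF feasible] unfolding F_def by blast
    have "0 \<le> Re (hform S hs)" unfolding w[symmetric] by simp
    then show ?thesis
      using max[OF \<open>w \<in> F\<close>] w by (simp add: P1_objective_def Re_hform_outer)
  qed
  moreover have "P1_feasible Pbar Pt \<epsilon> R h0 (outer v)"
    using \<open>v \<in> F\<close> unfolding F_def P1_feasible_outer_iff .
  ultimately show ?thesis
    using rank_outer[OF \<open>v \<noteq> 0\<close>] unfolding P1_optimal_def by blast
qed

end
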